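(* For any $s,g$, every graph $G=(V,E)$ satisfying $S(s,g)$ has the following property: for every $D\subseteq V$ with $|D|\le \frac{gs}{4}$ there exists a set $Z\subseteq V$ with $|Z|\le \frac{2|D|}{s}$ such that the induced graph $G[V\setminus(D\cup Z)]$ satisfies $S\left(\frac{s}{2},\frac{g}{2}\right)$.
   Context: For a graph $H$ and $A\subseteq V(H)$, $N_H(A)$ is the set of vertices of $H$ outside $A$ having at least one neighbor in $A$. $H$ satisfies $S(s,g)$ if every $A\subseteq V(H)$ with $|A|\le g$ has $|N_H(A)|\ge s|A|$ (for an induced subgraph, neighborhoods are taken inside that subgraph). *)

theory Defs
  imports Complex_Main
begin

definition simple_graph :: "'a set \<Rightarrow> ('a \<Rightarrow> 'a \<Rightarrow> bool) \<Rightarrow> bool" where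
  "simple_graph V E \<longleftrightarrow> finite V \<and> (\<forall>u v. E u v \<longrightarrow> E v u) \<and> (\<forall>v. \<not> E v v)"

definition nbhd :: "'a set \<Rightarrow> ('a \<Rightarrow> 'a \<Rightarrow> bool) \<Rightarrow> 'a set \<Rightarrow> 'a set" where
  "nbhd W E A = {v \<in> W - A. \<exists>a\<in>A. E a v}"

text \<open>The induced subgraph on W satisfies S(s,g).\<close>
definition expansion_S :: "'a set \<Rightarrow> ('a \<Rightarrow> 'a \<Rightarrow> bool) \<Rightarrow> real \<Rightarrow> real \<Rightarrow> bool" where
  "expansion_S W E s g \<longleftrightarrow>
     (\<forall>A. A \<subseteq> W \<and> real (card A) \<le> g \<longrightarrow> real (card (nbhd W E A)) \<ge> s * real (card A))"

end

theory Submission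
  imports Defs
begin

text \<open>Let W = V - D and take Z \<subseteq> W of maximum size among the sets with |Z| \<le> g and
  |N_W(Z)| \<le> (s/2)|Z|. In G every such Z has |N_V(Z)| \<ge> s|Z|, and N_V(Z) \<subseteq> N_W(Z) \<union> D, so
  (s/2)|Z| \<le> |D|, i.e. |Z| \<le> 2|D|/s \<le> g/2. If some A \<subseteq> W - Z with |A| \<le> g/2 expanded by
  less than s/2 in G[W - Z], then Z \<union> A would be a larger set of the same kind, because
  N_W(Z \<union> A) \<subseteq> N_W(Z) \<union> N_{W-Z}(A).\<close>

definition poorly_expanding :: "'a set \<Rightarrow> ('a \<Rightarrow> 'a \<Rightarrow> bool) \<Rightarrow> real \<Rightarrow> real \<Rightarrow> 'a set \<Rightarrow> bool" where
  "poorly_expanding W E t g Z \<longleftrightarrow>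
     Z \<subseteq> W \<and> real (card Z) \<le> g \<and> real (card (nbhd W E Z)) \<le> t * real (card Z)"

lemma nbhd_subset_nbhd_Diff_Un:
  "nbhd V E Z \<subseteq> nbhd (V - D) E Z \<union> D"
  unfolding nbhd_def by auto

lemma nbhd_Un_subset:
  "nbhd W E (Z \<union> A) \<subseteq> nbhd W E Z \<union> nbhd (W - Z) E A"
  unfolding nbhd_def by auto

lemma card_nbhd_Un_le:
  assumes "finite W"
  shows "card (nbhd W E (Z \<union> A)) \<le> card (nbhd W E Z) + card (nbhd (W - Z) E A)"
proof -
  have "card (nbhd W E (Z \<union> A)) \<le> card (nbhd W E Z \<union> nbhd (W - Z) E A)"
    using assms by (intro card_mono nbhd_Un_subset) (auto simp: nbhd_def)
  also have "\<dots> \<le> card (nbhd W E Z) + card (nbhd (W - Z) E A)"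
    by (rule card_Un_le)
  finally show ?thesis .
qed

lemma ex_max_card_poorly_expanding:
  assumes "finite W" and "g \<ge> 0"
  obtains Z where "poorly_expanding W E t g Z"
    and "\<And>Y. poorly_expanding W E t g Y \<Longrightarrow> card Y \<le> card Z"
proof -
  have "poorly_expanding W E t g {}"
    using assms(2) by (simp add: poorly_expanding_def nbhd_def)
  moreover have "\<forall>Y. poorly_expanding W E t g Y \<longrightarrow> card Y < card W + 1"
    using assms(1) by (auto simp: poorly_expanding_def less_Suc_eq_le intro: card_mono)
  ultimately show ?thesis
    using that ex_has_greatest_nat[of "poorly_expanding W E t g" "{}" card "card W + 1"]
    by blast
qed

lemma card_poorly_expanding_le:
  assumes "finite V" and "finite D" and "expansion_S V E s g" and "t < s"
    and "poorly_expanding (V - D) E t g Z"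
  shows "real (card Z) \<le> real (card D) / (s - t)"
proof -
  have Z: "Z \<subseteq> V - D" "real (card Z) \<le> g" "real (card (nbhd (V - D) E Z)) \<le> t * real (card Z)"
    using assms(5) by (auto simp: poorly_expanding_def)
  have "s * real (card Z) \<le> real (card (nbhd V E Z))"
    using assms(3) Z(1,2) by (auto simp: expansion_S_def)
  also have "card (nbhd V E Z) \<le> card (nbhd (V - D) E Z \<union> D)"
    using assms(1,2) by (intro card_mono nbhd_subset_nbhd_Diff_Un) (auto simp: nbhd_def)
  also have "\<dots> \<le> card (nbhd (V - D) E Z) + card D"
    by (rule card_Un_le)
  finally have "(s - t) * real (card Z) \<le> real (card D)"
    using Z(3) by (simp add: algebra_simps)
  then show ?thesis
    using assms(4) by (simp add: field_simps)
qed

lemma poorly_expanding_Un: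
  assumes "finite W" and "poorly_expanding W E t g Z"
    and "A \<subseteq> W - Z" and "real (card (nbhd (W - Z) E A)) \<le> t * real (card A)"
    and "real (card Z) + real (card A) \<le> g"
  shows "poorly_expanding W E t g (Z \<union> A)"
proof -
  have Z: "Z \<subseteq> W" "real (card (nbhd W E Z)) \<le> t * real (card Z)"
    using assms(2) by (auto simp: poorly_expanding_def)
  have card_ZA: "card (Z \<union> A) = card Z + card A"
    using assms(1,3) Z(1) by (intro card_Un_disjoint) (auto intro: finite_subset)
  have "real (card (nbhd W E (Z \<union> A))) \<le> t * real (card Z) + t * real (card A)"
    using card_nbhd_Un_le[OF assms(1), of E Z A] Z(2) assms(4) by linarith
  then show ?thesis
    using Z(1) assms(3,5) card_ZA by (auto simp: poorly_expanding_def algebra_simps)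
qed

lemma expansion_S_Diff_max_poorly_expanding:
  assumes "finite W" and "poorly_expanding W E t g Z"
    and max: "\<And>Y. poorly_expanding W E t g Y \<Longrightarrow> card Y \<le> card Z"
    and "real (card Z) + h \<le> g"
  shows "expansion_S (W - Z) E t h"
  unfolding expansion_S_def
proof (intro allI impI)
  fix A assume A: "A \<subseteq> W - Z \<and> real (card A) \<le> h"
  show "t * real (card A) \<le> real (card (nbhd (W - Z) E A))"
  proof (rule ccontr)
    assume less: "\<not> ?thesis"
    then have "A \<noteq> {}"
      by (auto simp: nbhd_def)
    moreover have "finite A" "finite Z"
      using A assms(1,2) by (auto simp: poorly_expanding_def intro: finite_subset)
    moreover have "poorly_expanding W E t g (Z \<union> A)"
      using A less assms(4) by (intro poorly_expanding_Un[OF assms(1,2)]) auto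
    then have "card (Z \<union> A) \<le> card Z"
      by (rule max)
    moreover have "Z \<inter> A = {}"
      using A by blast
    ultimately show False
      by (simp add: card_Un_disjoint)
  qed
qed

theorem lemma2p2:
  fixes V :: "'a set" and E :: "'a \<Rightarrow> 'a \<Rightarrow> bool" and s g :: real
  assumes "simple_graph V E" and "s > 0" and "g > 0"
    and "expansion_S V E s g"
  shows "\<forall>D. D \<subseteq> V \<and> real (card D) \<le> g * s / 4 \<longrightarrow>
           (\<exists>Z. Z \<subseteq> V \<and> real (card Z) \<le> 2 * real (card D) / s \<and>
                expansion_S (V - (D \<union> Z)) E (s / 2) (g / 2))"
proof (intro allI impI)
  fix D assume D: "D \<subseteq> V \<and> real (card D) \<le> g * s / 4"
  have "finite V"
    using assms(1) by (simp add: simple_graph_def)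
  then obtain Z where Z: "poorly_expanding (V - D) E (s / 2) g Z"
    and max: "\<And>Y. poorly_expanding (V - D) E (s / 2) g Y \<Longrightarrow> card Y \<le> card Z"
    using ex_max_card_poorly_expanding[of "V - D" g] assms(3) by auto
  moreover have "finite D"
    using D \<open>finite V\<close> by (auto intro: finite_subset)
  ultimately have card_Z: "real (card Z) \<le> 2 * real (card D) / s"
    using card_poorly_expanding_le[OF \<open>finite V\<close> _ assms(4) _ Z] assms(2)
    by (simp add: field_simps)
  also have "\<dots> \<le> g / 2"
    using D assms(2) by (simp add: field_simps)
  finally have "expansion_S ((V - D) - Z) E (s / 2) (g / 2)"
    using \<open>finite V\<close> Z max by (intro expansion_S_Diff_max_poorly_expanding) auto
  moreover have "Z \<subseteq> V"
    using Z by (auto simp: poorly_expanding_def)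
  moreover have "V - (D \<union> Z) = (V - D) - Z"
    by blast
  ultimately show "\<exists>Z. Z \<subseteq> V \<and> real (card Z) \<le> 2 * real (card D) / s \<and>
                expansion_S (V - (D \<union> Z)) E (s / 2) (g / 2)"
    using card_Z by auto
qed

end
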